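(* In the tracking setting, fix $k\geq0$ and assume (i) $\|s_{k+1}-s_k\|_2<\min\big\{r_A,\ r_B,\ \frac{q_B\rho}{\lambda_A\lambda_F}\big\}$; (ii) $\|\bar w_k-w^\ast_k\|_2<q_B\rho$; (iii) $\big(1+\frac{\lambda_H\lambda_B}{\rho}\big)\|\bar w_k-w^\ast_k\|_2+\lambda_H\lambda_B\|s_{k+1}-s_k\|_2<\delta$. Then $$\|\bar w_{k+1}-w^\ast_{k+1}\|_2\leq\beta_w(\rho,M)\|\bar w_k-w^\ast_k\|_2+\beta_s(\rho,M)\|s_{k+1}-s_k\|_2,$$ where $$\beta_w(\rho,M):=C(1+\rho\lambda_G)\Big(1+\frac{\lambda_B\lambda_H}{\rho}\Big)M^{-\psi}+\frac{\lambda_B\lambda_H}{\rho},\qquad \beta_s(\rho,M):=C(1+\rho\lambda_G)\lambda_B\lambda_HM^{-\psi}+\frac{\lambda_B\lambda_H\lambda_A\lambda_F}{\rho}.$$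
   Context: Problem data: $z=(z_1,\dots,z_P)\in\mathbb{R}^{n_z}$; $\mathcal{Z}=\mathcal{Z}_1\times\cdots\times\mathcal{Z}_P$ a product of nonempty bounded boxes; $J(z)=\sum_iJ_i(z_i)$ with polynomials $J_i$; polynomial maps $Q_c:\mathbb{R}^{n_z}\to\mathbb{R}^m$, $g_i:\mathbb{R}^{n_i}\to\mathbb{R}^{q_i}$; $T_i\in\mathbb{R}^{q_i\times p}$; $q=\sum q_i$; $\mathcal{S}\subseteq\mathbb{R}^p$; $G(z,s)=(Q_c(z),g_1(z_1)+T_1s,\dots,g_P(z_P)+T_Ps)$; $L_\rho(z,\mu,s)=J(z)+(\mu+\frac\rho2G(z,s))^\top G(z,s)$; for $w=(z,\mu)$, $F(w,s)=(\nabla J(z)+\nabla_zG(z,s)^\top\mu,\ G(z,s))$; $\mathcal{N}:=\mathcal{N}_{\mathcal{Z}\times\mathbb{R}^{m+q}}$. A KKT point of $(P_s)$: $\min J(z)$ s.t. $G(z,s)=0$, $z\in\mathcal{Z}$, is $w$ with $0\in F(w,s)+\mathcal{N}(w)$. For a reference multiplier $\tilde\mu$: $H^{\tilde\mu}_\rho(w,d,s):=(\nabla J(z)+\nabla_zG(z,s)^\top\mu,\ G(z,s)+d+(\tilde\mu-\mu)/\rho)$. Constants: $\lambda_F:=P\max_i\|T_i\|_2$; $\lambda_H>0$ with $\|H^{\tilde\mu}_\rho(w,d,s)-H^{\tilde\mu}_\rho(w,d',s')\|\le\lambda_H\|(d,s)-(d',s')\|$ for all arguments; $\lambda_G>0$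 a Lipschitz constant of $z\mapsto G(z,s)$ on $\mathcal{Z}$ (independent of $s$). Primal sweep on $L_\rho(\cdot,\mu,s)$: block-coordinate projected-gradient pass over $i=1,\dots,P$ in order, each block update $z_i\leftarrow\pi_{\mathcal{Z}_i}(z_i-\frac1{c_i}\nabla_{z_i}L_\rho)$ (gradient evaluated with already updated preceding blocks) with curvature $c_i$ obtained by backtracking (multiply by $\beta>1$ from an initial $c_i^0>0$) until $f(u)+\frac{\alpha_i}2\|u-z_i\|^2\le f(z_i)+\nabla f(z_i)^\top(u-z_i)+\frac{c_i}2\|u-z_i\|^2$ for the block function $f$, with $\alpha_i>0$. Tracking setting: fix $\rho>0$, $M\ge1$. Given parameters $(s_k)_{k\ge0}\subset\mathcal{S}$ and KKT points $w^\ast_k=(z^\ast_k,\mu^\ast_k)$ of $(P_{s_k})$. Iterates $\bar w_k=(\bar z_k,\bar\mu_k)$ with $\bar z_k\in\mathcal{Z}$ are produced by: $\bar z_{k+1}$ = result of $M$ successive primal sweeps on $L_\rho(\cdot,\bar\mu_k,s_{k+1})$ started at $\bar z_k$; $\bar\mu_{k+1}=\bar\mu_k+\rho G(\bar z_{k+1},s_{k+1})$. Let $z^\infty_k$ be the limit of infinitely many sweeps on $L_\rho(\cdot,\bar\mu_k,s_{k+1})$ started at $\bar z_k$, and $w^\infty_k:=(z^\infty_k,\ \bar\mu_k+\rho G(z^\infty_k,s_{k+1}))$; $d_k:=(\bar\mu_k-\mu^\ast_k)/\rho$. Standing hypotheses, for every $k$: (A) there are constants $r_A,\delta_A,\lambda_A>0$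 (independent of $k$) such that for every $s\in\mathcal{B}(s_k,r_A)\cap\mathcal{S}$ there is a unique $w^\ast(s)\in\mathcal{B}(w^\ast_k,\delta_A)$ with $0\in F(w^\ast(s),s)+\mathcal{N}(w^\ast(s))$, for all $s,s'\in\mathcal{B}(s_k,r_A)\cap\mathcal{S}$ one has $\|w^\ast(s)-w^\ast(s')\|\le\lambda_A\|F(w^\ast(s'),s)-F(w^\ast(s'),s')\|$, and $w^\ast_{k+1}=w^\ast(s_{k+1})$ whenever $\|s_{k+1}-s_k\|<r_A$; (B) there are constants $r_B,q_B,\lambda_B>0$ and $\delta_B\ge\delta_A$ (independent of $k$) such that for all $d\in\mathcal{B}(0,q_B)$, $s\in\mathcal{B}(s_k,r_B)\cap\mathcal{S}$ there is a unique $w^\ast_k(d,s)\in\mathcal{B}(w^\ast_k,\delta_B)$ with $0\in H^{\mu^\ast_k}_\rho(w^\ast_k(d,s),d,s)+\mathcal{N}(w^\ast_k(d,s))$, and $\|w^\ast_k(d,s)-w^\ast_k(d',s')\|\le\lambda_B\|H^{\mu^\ast_k}_\rho(w^\ast_k(d',s'),d,s)-H^{\mu^\ast_k}_\rho(w^\ast_k(d',s'),d',s')\|$ for all such $d,d',s,s'$; (C) there are constants $C>0$, $\delta>0$, $\psi>0$ (independent of $k$) such that the sequence of sweeps defining $z^\infty_k$ converges, $w^\infty_k=w^\ast_k(d_k,s_{k+1})$ whenever $d_k\in\mathcal{B}(0,q_B)$ and $\|s_{k+1}-s_k\|<r_B$, and if $\|\bar z_k-z^\infty_k\|<\delta$ then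 $\|\bar z_{k+1}-z^\infty_k\|\le CM^{-\psi}\|\bar z_k-z^\infty_k\|$. (In the paper, $\psi=\psi(d_L,n_z)=1/(d_L(3d_L-3)^{n_z-1}-2)$ with $d_L$ the degree of the augmented Lagrangian.) *)

theory Defs
  imports "HOL-Analysis.Analysis"
begin

text \<open>Vectors: z :: real^'n (the n_z primal variables), multipliers mu :: (real^'m) \<times> (real^'q)
  (the m + q equality constraints; the first factor belongs to Q_c, the second to the stacked
  rows g_i(z_i) + T_i s), parameters s :: real^'p.  Blocks are encoded by an assignment
  blk :: 'n => nat of coordinates to blocks 0..P-1 and bq :: 'q => nat of constraint rows to blocks.\<close>

definition grad :: "(real^'n \<Rightarrow> real) \<Rightarrow> real^'n \<Rightarrow> real^'n" where
  "grad f z = (\<chi> j. frechet_derivative f (at z) (axis j 1))"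

definition jacT :: "(real^'n \<Rightarrow> 'b::real_inner) \<Rightarrow> real^'n \<Rightarrow> 'b \<Rightarrow> real^'n" where
  "jacT G z mu = (\<chi> j. inner mu (frechet_derivative G (at z) (axis j 1)))"

definition Gfun :: "(real^'n \<Rightarrow> real^'m) \<Rightarrow> (real^'n \<Rightarrow> real^'q) \<Rightarrow> real^'p^'q
    \<Rightarrow> real^'n \<Rightarrow> real^'p \<Rightarrow> (real^'m) \<times> (real^'q)" where
  "Gfun Qc g T z s = (Qc z, g z + T *v s)"

definition Ffun :: "(real^'n \<Rightarrow> real) \<Rightarrow> (real^'n \<Rightarrow> real^'m) \<Rightarrow> (real^'n \<Rightarrow> real^'q)
    \<Rightarrow> real^'p^'q \<Rightarrow> (real^'n) \<times> ((real^'m) \<times> (real^'q)) \<Rightarrow> real^'p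
    \<Rightarrow> (real^'n) \<times> ((real^'m) \<times> (real^'q))" where
  "Ffun J Qc g T w s =
     (grad J (fst w) + jacT (\<lambda>z. Gfun Qc g T z s) (fst w) (snd w), Gfun Qc g T (fst w) s)"

definition Hfun :: "(real^'n \<Rightarrow> real) \<Rightarrow> (real^'n \<Rightarrow> real^'m) \<Rightarrow> (real^'n \<Rightarrow> real^'q)
    \<Rightarrow> real^'p^'q \<Rightarrow> real \<Rightarrow> (real^'m) \<times> (real^'q) \<Rightarrow> (real^'n) \<times> ((real^'m) \<times> (real^'q))
    \<Rightarrow> (real^'m) \<times> (real^'q) \<Rightarrow> real^'p \<Rightarrow> (real^'n) \<times> ((real^'m) \<times> (real^'q))" where
  "Hfun J Qc g T rho mut w d s =
     (grad J (fst w) + jacT (\<lambda>z. Gfun Qc g T z s) (fst w) (snd w),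
      Gfun Qc g T (fst w) s + d + (1 / rho) *\<^sub>R (mut - snd w))"

definition Lagr :: "(real^'n \<Rightarrow> real) \<Rightarrow> (real^'n \<Rightarrow> real^'m) \<Rightarrow> (real^'n \<Rightarrow> real^'q)
    \<Rightarrow> real^'p^'q \<Rightarrow> real \<Rightarrow> real^'n \<Rightarrow> (real^'m) \<times> (real^'q) \<Rightarrow> real^'p \<Rightarrow> real" where
  "Lagr J Qc g T rho z mu s =
     J z + inner (mu + (rho / 2) *\<^sub>R Gfun Qc g T z s) (Gfun Qc g T z s)"

definition normal_cone :: "'a::real_inner set \<Rightarrow> 'a \<Rightarrow> 'a set" where
  "normal_cone X w = (if w \<in> X then {v. \<forall>y\<in>X. inner v (y - w) \<le> 0} else {})"

definition is_KKT where
  "is_KKT J Qc g T Z w s =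
     (0 \<in> {Ffun J Qc g T w s + v | v. v \<in> normal_cone (Z \<times> UNIV) w})"

definition is_HKKT where
  "is_HKKT J Qc g T Z rho mut w d s =
     (0 \<in> {Hfun J Qc g T rho mut w d s + v | v. v \<in> normal_cone (Z \<times> UNIV) w})"

text \<open>Block matrix T_i: the rows of T belonging to block i (other rows set to zero,
  which does not change the operator 2-norm).\<close>
definition blockmat :: "('q \<Rightarrow> nat) \<Rightarrow> real^'p^'q \<Rightarrow> nat \<Rightarrow> real^'p^'q" where
  "blockmat bq T i = (\<chi> r. if bq r = i then T $ r else 0)"

definition blockset :: "('n \<Rightarrow> nat) \<Rightarrow> real^'n \<Rightarrow> real^'n \<Rightarrow> nat \<Rightarrow> real^'n \<Rightarrow> (real^'n) set" where
  "blockset blk lo hi i z =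
     {u. (\<forall>j. blk j = i \<longrightarrow> lo $ j \<le> u $ j \<and> u $ j \<le> hi $ j) \<and> (\<forall>j. blk j \<noteq> i \<longrightarrow> u $ j = z $ j)}"

definition block_grad :: "('n \<Rightarrow> nat) \<Rightarrow> (real^'n \<Rightarrow> real) \<Rightarrow> nat \<Rightarrow> real^'n \<Rightarrow> real^'n" where
  "block_grad blk f i z = (\<chi> j. if blk j = i then grad f z $ j else 0)"

definition block_trial where
  "block_trial blk lo hi f i z c =
     closest_point (blockset blk lo hi i z) (z - (1 / c) *\<^sub>R block_grad blk f i z)"

definition bt_ok where
  "bt_ok alpha blk lo hi f i z c =
     (let u = block_trial blk lo hi f i z c in
        f u + alpha i / 2 * (norm (u - z))\<^sup>2
          \<le> f z + inner (block_grad blk f i z) (u - z) + c / 2 * (norm (u - z))\<^sup>2)"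

definition block_curv where
  "block_curv alpha c0 beta blk lo hi f i z =
     c0 i * beta ^ (LEAST j. bt_ok alpha blk lo hi f i z (c0 i * beta ^ j))"

definition block_update where
  "block_update alpha c0 beta blk lo hi f i z =
     block_trial blk lo hi f i z (block_curv alpha c0 beta blk lo hi f i z)"

definition sweep where
  "sweep P alpha c0 beta blk lo hi f z =
     foldl (\<lambda>x i. block_update alpha c0 beta blk lo hi f i x) z [0..<P]"

end

theory Submission
  imports Defs
begin

(* Write e = |wbar_k - w*_k| and ds = |s_(k+1) - s_k|.  The argument
   compares three points:  the current KKT point w*_k, the next one w*_(k+1), and the exact
   outcome w^inf_k of infinitely many primal sweeps.
   (1) Hypothesis (A) plus the fact that F depends on s only through the affine term T s
       give |w*_(k+1) - w*_k| <= lamA lamF ds.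
   (2) Both w*_k and w*_(k+1) solve the perturbed generalized equation 0 \<in> H(w,d,s) + N(w)
       with reference multiplier mu*_k, for d = 0 and d = (mu*_(k+1) - mu*_k)/rho respectively;
       so does w^inf_k for d = d_k.  The Lipschitz stability of hypothesis (B) together with the
       Lipschitz continuity of H in (d,s) bounds |w^inf_k - w*_k| and |w^inf_k - w*_(k+1)|.
   (3) The finite-sweep rate of (C) and the multiplier update bound |wbar_(k+1) - w^inf_k|,
       and the triangle inequality yields the claimed recursion. *)

subsection \<open>Primal sweeps stay in the box\<close>

lemma blockset_closed: "closed (blockset blk lo hi i z)"
  unfolding blockset_def
  apply (intro closed_Collect_all closed_Collect_conj closed_Collect_imp closed_Collect_le
      closed_Collect_eq open_Collect_neg closed_Collect_const continuous_intros)
  subgoal for j by (cases "blk j = i") auto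
  done

text \<open>A block update projects onto a nonempty closed subset of the box (the box with all
  other blocks frozen), hence maps the box into itself.\<close>
lemma block_update_in_box:
  assumes "z \<in> cbox lo hi"
  shows "block_update alpha c0 beta blk lo hi f i z \<in> cbox lo hi"
proof -
  have "z \<in> blockset blk lo hi i z"
    using assms unfolding blockset_def by (auto simp: mem_box_cart)
  moreover have "blockset blk lo hi i z \<subseteq> cbox lo hi"
    using assms unfolding blockset_def by (auto simp: mem_box_cart) (metis)+
  ultimately show ?thesis
    unfolding block_update_def block_trial_def
    using closest_point_in_set[OF blockset_closed] by blast
qed

lemma sweep_in_box:
  assumes "z \<in> cbox lo hi"
  shows "sweep P alpha c0 beta blk lo hi f z \<in> cbox lo hi"
proof -
  have "x \<in> cbox lo hi \<Longrightarrow> foldl (\<lambda>x i. block_update alpha c0 beta blk lo hi f i x) x ids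
          \<in> cbox lo hi" for x ids
    by (induction ids arbitrary: x) (auto intro: block_update_in_box)
  then show ?thesis using assms unfolding sweep_def .
qed

text \<open>The limit z^inf of infinitely many sweeps started in the box lies in the box, since the
  box is closed; this is needed to apply the Lipschitz bound of G at z^inf.\<close>
lemma sweep_limit_in_box:
  assumes "convergent (\<lambda>n. (sweep P alpha c0 beta blk lo hi f ^^ n) z)" and "z \<in> cbox lo hi"
  shows "lim (\<lambda>n. (sweep P alpha c0 beta blk lo hi f ^^ n) z) \<in> cbox lo hi"
proof -
  have iterates_in: "(sweep P alpha c0 beta blk lo hi f ^^ n) z \<in> cbox lo hi" for n
    using assms(2) by (induction n) (auto intro: sweep_in_box)
  show ?thesis
    using closed_sequentially[OF closed_cbox iterates_in assms(1)[unfolded convergent_LIMSEQ_iff]] .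
qed

subsection \<open>Dependence of F and H on the parameter\<close>

text \<open>Adding a constant does not change the Fr\'echet derivative, whether or not it exists.\<close>
lemma frechet_derivative_add_const:
  "frechet_derivative (\<lambda>x. f x + c) net = frechet_derivative f net"
proof -
  have "((\<lambda>x. f x + c) has_derivative D) net \<longleftrightarrow> (f has_derivative D) net" for D
    using has_derivative_add_const[of "\<lambda>x. f x + c" D net "- c"] has_derivative_add_const[of f D net c]
    by auto
  then show ?thesis unfolding frechet_derivative_def by simp
qed

text \<open>The parameter enters G only through the additive term T s, so the Jacobian of G with
  respect to z does not depend on s.\<close>
lemma jacT_Gfun_param_indep:
  "jacT (\<lambda>z. Gfun Qc g T z s) z mu = jacT (\<lambda>z. Gfun Qc g T z s') z mu"
proof -
  have shift: "(\<lambda>z. Gfun Qc g T z \<sigma>) = (\<lambda>z. Gfun Qc g T z 0 + (0, T *v \<sigma>))" for \<sigma>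
    by (simp add: Gfun_def)
  show ?thesis unfolding jacT_def shift frechet_derivative_add_const ..
qed

lemma Ffun_param_diff:
  "Ffun J Qc g T w s' - Ffun J Qc g T w s = (0, (0, T *v (s' - s)))"
  unfolding Ffun_def using jacT_Gfun_param_indep[of Qc g T s' "fst w" "snd w" s]
  by (simp add: Gfun_def matrix_vector_mult_diff_distrib)

definition blockwise_norm_bound :: "nat \<Rightarrow> ('q \<Rightarrow> nat) \<Rightarrow> real^'p^'q \<Rightarrow> real" where
  "blockwise_norm_bound P bq T = real P * Max ((\<lambda>i. onorm (\<lambda>x. blockmat bq T i *v x)) ` {..<P})"

lemma matrix_block_decomposition:
  assumes "\<forall>r. bq r < P"
  shows "T *v x = (\<Sum>i<P. blockmat bq T i *v x)"
proof (rule vec_eq_iff[THEN iffD2], rule allI)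
  fix r
  have "(\<Sum>i<P. blockmat bq T i *v x) $ r = (\<Sum>i<P. if bq r = i then (T *v x) $ r else 0)"
    unfolding sum_component by (rule sum.cong) (auto simp: blockmat_def matrix_vector_mult_def)
  also have "\<dots> = (T *v x) $ r" using assms by (simp add: sum.delta)
  finally show "(T *v x) $ r = (\<Sum>i<P. blockmat bq T i *v x) $ r" by simp
qed

lemma matrix_blockwise_norm_bound:
  assumes "\<forall>r. bq r < P"
  shows "norm (T *v x) \<le> blockwise_norm_bound P bq T * norm x"
proof -
  let ?m = "Max ((\<lambda>i. onorm (\<lambda>x. blockmat bq T i *v x)) ` {..<P})"
  have "norm (T *v x) \<le> (\<Sum>i<P. norm (blockmat bq T i *v x))"
    using matrix_block_decomposition[OF assms, of T x] norm_sum by metis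
  also have "\<dots> \<le> (\<Sum>i<P. ?m * norm x)"
  proof (rule sum_mono)
    fix i assume i: "i \<in> {..<P}"
    have "norm (blockmat bq T i *v x) \<le> onorm (\<lambda>x. blockmat bq T i *v x) * norm x"
      by (rule onorm) (rule matrix_vector_mul_bounded_linear)
    also have "\<dots> \<le> ?m * norm x"
      by (rule mult_right_mono) (use i in auto)
    finally show "norm (blockmat bq T i *v x) \<le> ?m * norm x" .
  qed
  finally show ?thesis by (simp add: blockwise_norm_bound_def)
qed

lemma Ffun_param_lipschitz:
  assumes "\<forall>r. bq r < P"
  shows "norm (Ffun J Qc g T w s' - Ffun J Qc g T w s) \<le> blockwise_norm_bound P bq T * norm (s' - s)"
  unfolding Ffun_param_diff using matrix_blockwise_norm_bound[OF assms] by (simp add: norm_Pair1)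

text \<open>H differs from F by the affine term d + (mut - mu)/rho.  A KKT point w of (P_s)
  therefore solves the perturbed generalized equation for the perturbation d = (mu - mut)/rho
  that cancels this term.\<close>
lemma KKT_solves_perturbed_equation:
  assumes "is_KKT J Qc g T Z w s"
  shows "is_HKKT J Qc g T Z rho mut w ((1 / rho) *\<^sub>R (snd w - mut)) s"
proof -
  have "Hfun J Qc g T rho mut w ((1 / rho) *\<^sub>R (snd w - mut)) s = Ffun J Qc g T w s"
    unfolding Hfun_def Ffun_def by (simp add: algebra_simps)
  then show ?thesis using assms unfolding is_HKKT_def is_KKT_def by simp
qed

lemma norm_fst_le_norm: "norm (fst x) \<le> norm x"
  by (metis norm_fst_le prod.collapse)

lemma scaled_snd_diff_le:
  assumes "rho > 0" and "norm (a - b) \<le> B"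
  shows "norm ((1 / rho) *\<^sub>R (snd a - snd b)) \<le> B / rho"
proof -
  have "norm (snd (a - b)) \<le> norm (a - b)" by (metis norm_snd_le prod.collapse)
  then show ?thesis using assms by (simp add: divide_right_mono)
qed

text \<open>If x < q r / b for some x \<ge> 0, then b is positive and b x / r < q: a parameter step
  satisfying the smallness condition (i) keeps the induced perturbation inside the radius qB.\<close>
lemma scaled_below_radius:
  fixes x q r b :: real
  assumes "0 \<le> x" "x < q * r / b" "q > 0" "r > 0"
  shows "b * x / r < q"
proof -
  have "b > 0"
  proof (rule ccontr)
    assume "\<not> b > 0"
    then have "q * r / b \<le> 0" using assms(3,4) by (simp add: divide_nonneg_nonpos)
    then show False using assms(1,2) by linarith
  qed
  then show ?thesis using assms by (simp add: pos_less_divide_eq pos_divide_less_eq mult.commute)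
qed

subsection \<open>Abstract sensitivity estimates\<close>

lemma KKT_solution_shift:
  fixes w0 w1 :: "'w::real_normed_vector" and s0 s1 :: "'s::real_normed_vector"
    and F :: "'w \<Rightarrow> 's \<Rightarrow> 'v::real_normed_vector"
  assumes map: "\<exists>wA.
         (\<forall>\<sigma>\<in>ball s0 rA \<inter> S. wA \<sigma> \<in> ball w0 dA \<and> sol (wA \<sigma>) \<sigma> \<and>
             (\<forall>w\<in>ball w0 dA. sol w \<sigma> \<longrightarrow> w = wA \<sigma>)) \<and>
         (\<forall>\<sigma>\<in>ball s0 rA \<inter> S. \<forall>\<sigma>'\<in>ball s0 rA \<inter> S.
             norm (wA \<sigma> - wA \<sigma>') \<le> lamA * norm (F (wA \<sigma>') \<sigma> - F (wA \<sigma>') \<sigma>')) \<and>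
         (norm (s1 - s0) < rA \<longrightarrow> w1 = wA s1)"
    and F_lip: "norm (F w0 s1 - F w0 s0) \<le> L * norm (s1 - s0)"
    and sol0: "sol w0 s0" and S: "s0 \<in> S" "s1 \<in> S"
    and close: "norm (s1 - s0) < rA" and "dA > 0" "lamA \<ge> 0"
  shows "w1 \<in> ball w0 dA" and "norm (w1 - w0) \<le> lamA * L * norm (s1 - s0)"
proof -
  obtain wA where A1: "\<forall>\<sigma>\<in>ball s0 rA \<inter> S. wA \<sigma> \<in> ball w0 dA \<and> sol (wA \<sigma>) \<sigma> \<and>
             (\<forall>w\<in>ball w0 dA. sol w \<sigma> \<longrightarrow> w = wA \<sigma>)"
    and A2: "\<forall>\<sigma>\<in>ball s0 rA \<inter> S. \<forall>\<sigma>'\<in>ball s0 rA \<inter> S.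
             norm (wA \<sigma> - wA \<sigma>') \<le> lamA * norm (F (wA \<sigma>') \<sigma> - F (wA \<sigma>') \<sigma>')"
    and A3: "w1 = wA s1"
    using map close by blast
  have balls: "s0 \<in> ball s0 rA \<inter> S" "s1 \<in> ball s0 rA \<inter> S"
    using S close le_less_trans[OF norm_ge_zero close] by (auto simp: dist_norm norm_minus_commute)
  have w0: "wA s0 = w0" using A1 balls(1) sol0 \<open>dA > 0\<close> by force
  show "w1 \<in> ball w0 dA" using A1 balls(2) A3 by blast
  have "norm (w1 - w0) \<le> lamA * norm (F w0 s1 - F w0 s0)"
    using A2 balls w0 A3 by metis
  also have "\<dots> \<le> lamA * (L * norm (s1 - s0))"
    using F_lip \<open>lamA \<ge> 0\<close> by (rule mult_left_mono)
  finally show "norm (w1 - w0) \<le> lamA * L * norm (s1 - s0)" by simp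
qed

text \<open>Step (2): if H is lamH-Lipschitz in (d,s), the perturbed solution map of hypothesis (B)
  is lamB lamH-Lipschitz; evaluated at the three solutions w0 = w(0,s0), w1 = w(d',s1) and
  winf = w(dk,s1) this gives the two distance estimates for winf.\<close>
lemma perturbed_solution_estimates:
  fixes w0 w1 winf :: "'w::real_normed_vector" and d' dk :: "'d::real_normed_vector"
    and s0 s1 :: "'s::real_normed_vector" and H :: "'w \<Rightarrow> 'd \<Rightarrow> 's \<Rightarrow> 'v::real_normed_vector"
  assumes map: "\<exists>wB.
         (\<forall>d\<in>ball 0 qB. \<forall>\<sigma>\<in>ball s0 rB \<inter> S.
             wB d \<sigma> \<in> ball w0 dB \<and> sol (wB d \<sigma>) d \<sigma> \<and>
             (\<forall>w\<in>ball w0 dB. sol w d \<sigma> \<longrightarrow> w = wB d \<sigma>)) \<and>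
         (\<forall>d\<in>ball 0 qB. \<forall>\<sigma>\<in>ball s0 rB \<inter> S. \<forall>d'\<in>ball 0 qB. \<forall>\<sigma>'\<in>ball s0 rB \<inter> S.
             norm (wB d \<sigma> - wB d' \<sigma>') \<le> lamB * norm (H (wB d' \<sigma>') d \<sigma> - H (wB d' \<sigma>') d' \<sigma>')) \<and>
         (dk \<in> ball 0 qB \<and> norm (s1 - s0) < rB \<longrightarrow> winf = wB dk s1)"
    and H_lip: "\<And>w d d' \<sigma> \<sigma>'. norm (H w d \<sigma> - H w d' \<sigma>') \<le> lamH * norm ((d, \<sigma>) - (d', \<sigma>'))"
    and sol0: "sol w0 0 s0" and sol1: "sol w1 d' s1" and w1: "w1 \<in> ball w0 dB"
    and S: "s0 \<in> S" "s1 \<in> S" and close: "norm (s1 - s0) < rB"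
    and dk: "norm dk \<le> a" "a < qB" and d': "norm d' \<le> b" "b < qB"
    and "dB > 0" "lamB \<ge> 0" "lamH \<ge> 0"
  shows "norm (winf - w0) \<le> lamB * lamH * (a + norm (s1 - s0))"
    and "norm (winf - w1) \<le> lamB * lamH * (a + b)"
proof -
  have dballs: "0 \<in> ball 0 qB" "dk \<in> ball 0 qB" "d' \<in> ball 0 qB"
  proof -
    have "0 < qB" using norm_ge_zero[of dk] dk by linarith
    then show "0 \<in> ball 0 qB" "dk \<in> ball 0 qB" "d' \<in> ball 0 qB" using dk d' by auto
  qed
  have sballs: "s0 \<in> ball s0 rB \<inter> S" "s1 \<in> ball s0 rB \<inter> S"
    using S close le_less_trans[OF norm_ge_zero close] by (auto simp: dist_norm norm_minus_commute)
  obtain wB where B1: "\<forall>d\<in>ball 0 qB. \<forall>\<sigma>\<in>ball s0 rB \<inter> S.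
             wB d \<sigma> \<in> ball w0 dB \<and> sol (wB d \<sigma>) d \<sigma> \<and>
             (\<forall>w\<in>ball w0 dB. sol w d \<sigma> \<longrightarrow> w = wB d \<sigma>)"
    and B2: "\<forall>d\<in>ball 0 qB. \<forall>\<sigma>\<in>ball s0 rB \<inter> S. \<forall>d'\<in>ball 0 qB. \<forall>\<sigma>'\<in>ball s0 rB \<inter> S.
             norm (wB d \<sigma> - wB d' \<sigma>') \<le> lamB * norm (H (wB d' \<sigma>') d \<sigma> - H (wB d' \<sigma>') d' \<sigma>')"
    and winf: "winf = wB dk s1"
    using map dballs(2) close by blast
  have lip: "norm (wB d \<sigma> - wB d2 \<sigma>') \<le> lamB * lamH * (norm (d - d2) + norm (\<sigma> - \<sigma>'))"
    if "d \<in> ball 0 qB" "d2 \<in> ball 0 qB" "\<sigma> \<in> ball s0 rB \<inter> S" "\<sigma>' \<in> ball s0 rB \<inter> S" for d d2 \<sigma> \<sigma>'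
  proof -
    have "norm (wB d \<sigma> - wB d2 \<sigma>') \<le> lamB * norm (H (wB d2 \<sigma>') d \<sigma> - H (wB d2 \<sigma>') d2 \<sigma>')"
      using B2 that by blast
    also have "\<dots> \<le> lamB * (lamH * norm ((d, \<sigma>) - (d2, \<sigma>')))"
      using H_lip \<open>lamB \<ge> 0\<close> by (rule mult_left_mono)
    also have "\<dots> \<le> lamB * (lamH * (norm (d - d2) + norm (\<sigma> - \<sigma>')))"
      using norm_Pair_le[of "d - d2" "\<sigma> - \<sigma>'"] \<open>lamB \<ge> 0\<close> \<open>lamH \<ge> 0\<close>
      by (intro mult_left_mono) auto
    finally show ?thesis by simp
  qed
  have "\<forall>w\<in>ball w0 dB. sol w 0 s0 \<longrightarrow> w = wB 0 s0" using B1 dballs(1) sballs(1) by blast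
  then have w0: "wB 0 s0 = w0" using sol0 \<open>dB > 0\<close> by auto
  have "\<forall>w\<in>ball w0 dB. sol w d' s1 \<longrightarrow> w = wB d' s1" using B1 dballs(3) sballs(2) by blast
  then have w1': "wB d' s1 = w1" using sol1 w1 by blast
  have "norm (winf - w0) \<le> lamB * lamH * (norm dk + norm (s1 - s0))"
    using lip[OF dballs(2,1) sballs(2,1)] winf w0 by simp
  also have "\<dots> \<le> lamB * lamH * (a + norm (s1 - s0))"
    using dk \<open>lamB \<ge> 0\<close> \<open>lamH \<ge> 0\<close> by (intro mult_left_mono) auto
  finally show "norm (winf - w0) \<le> lamB * lamH * (a + norm (s1 - s0))" .
  have "norm (winf - w1) \<le> lamB * lamH * norm (dk - d')"
    using lip[OF dballs(2,3) sballs(2,2)] winf w1' by simp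
  also have "\<dots> \<le> lamB * lamH * (a + b)"
    using norm_triangle_ineq4[of dk d'] dk d' \<open>lamB \<ge> 0\<close> \<open>lamH \<ge> 0\<close>
    by (intro mult_left_mono) auto
  finally show "norm (winf - w1) \<le> lamB * lamH * (a + b)" .
qed

lemma multiplier_update_error:
  fixes G :: "'a::real_normed_vector \<Rightarrow> 'b::real_normed_vector"
  assumes lip: "norm (G z - G z') \<le> L * norm (z - z')" and "rho \<ge> 0"
  shows "norm ((z, mu + rho *\<^sub>R G z) - (z', mu + rho *\<^sub>R G z')) \<le> (1 + rho * L) * norm (z - z')"
proof -
  have "(z, mu + rho *\<^sub>R G z) - (z', mu + rho *\<^sub>R G z') = (z - z', rho *\<^sub>R (G z - G z'))"
    by (simp add: scaleR_diff_right)
  then have "norm ((z, mu + rho *\<^sub>R G z) - (z', mu + rho *\<^sub>R G z'))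
          \<le> norm (z - z') + norm (rho *\<^sub>R (G z - G z'))"
    using norm_Pair_le by metis
  also have "norm (rho *\<^sub>R (G z - G z')) \<le> rho * (L * norm (z - z'))"
    using mult_left_mono[OF lip \<open>rho \<ge> 0\<close>] \<open>rho \<ge> 0\<close> by simp
  finally show ?thesis by (simp add: distrib_right)
qed

text \<open>The primal gap of wbar_k to w^inf_k is small enough
  for the sweep rate to apply, and the triangle inequality through w^inf_k gives the
  recursion for the tracking error.\<close>
lemma tracking_error_recursion:
  fixes wbar0 wbar1 winf wst0 wst1 :: "'a::real_normed_vector \<times> 'b::real_normed_vector"
  defines "e \<equiv> norm (wbar0 - wst0)"
  assumes near_old: "norm (winf - wst0) \<le> lamB * lamH * (e / rho + ds)"
    and near_new: "norm (winf - wst1) \<le> lamB * lamH * (e / rho + lamA * lamF * ds / rho)"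
    and rate: "norm (fst wbar0 - fst winf) < del \<Longrightarrow>
               norm (fst wbar1 - fst winf) \<le> C * mp * norm (fst wbar0 - fst winf)"
    and dual: "norm (wbar1 - winf) \<le> (1 + rho * lamG) * norm (fst wbar1 - fst winf)"
    and small: "(1 + lamH * lamB / rho) * e + lamH * lamB * ds < del"
    and "C * mp \<ge> 0" "1 + rho * lamG \<ge> 0" "rho > 0"
  shows "norm (wbar1 - wst1)
           \<le> (C * (1 + rho * lamG) * (1 + lamB * lamH / rho) * mp + lamB * lamH / rho) * e
             + (C * (1 + rho * lamG) * lamB * lamH * mp + lamB * lamH * lamA * lamF / rho) * ds"
proof -
  let ?gap = "(1 + lamH * lamB / rho) * e + lamH * lamB * ds"
  have "norm (fst wbar0 - fst winf) \<le> norm (wbar0 - winf)"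
    using norm_fst_le_norm[of "wbar0 - winf"] by simp
  also have "\<dots> \<le> e + norm (winf - wst0)"
    unfolding e_def using norm_triangle_ineq4[of "wbar0 - wst0" "winf - wst0"] by simp
  also have "\<dots> \<le> ?gap"
    using near_old by (simp add: algebra_simps)
  finally have gap: "norm (fst wbar0 - fst winf) \<le> ?gap" .
  have primal: "norm (fst wbar1 - fst winf) \<le> C * mp * ?gap"
    using rate[OF le_less_trans[OF gap small]] mult_left_mono[OF gap \<open>C * mp \<ge> 0\<close>] by linarith
  have "norm (wbar1 - wst1) \<le> norm (wbar1 - winf) + norm (winf - wst1)"
    using norm_triangle_ineq[of "wbar1 - winf" "winf - wst1"] by simp
  also have "\<dots> \<le> (1 + rho * lamG) * (C * mp * ?gap) + lamB * lamH * (e / rho + lamA * lamF * ds / rho)"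
    using dual mult_left_mono[OF primal \<open>1 + rho * lamG \<ge> 0\<close>] near_new by linarith
  also have "\<dots> = (C * (1 + rho * lamG) * (1 + lamB * lamH / rho) * mp + lamB * lamH / rho) * e
             + (C * (1 + rho * lamG) * lamB * lamH * mp + lamB * lamH * lamA * lamF / rho) * ds"
    using \<open>rho > 0\<close> by (simp add: field_simps)
  finally show ?thesis .
qed


theorem mainTheorem10:
  fixes Jb :: "nat \<Rightarrow> real^'n \<Rightarrow> real"
    and Qc :: "real^'n \<Rightarrow> real^'m"
    and g :: "real^'n \<Rightarrow> real^'q"
    and T :: "real^'p^'q"
    and blk :: "'n \<Rightarrow> nat" and bq :: "'q \<Rightarrow> nat" and P :: nat
    and lo hi :: "real^'n"
    and S :: "(real^'p) set"
    and alpha c0 :: "nat \<Rightarrow> real" and beta :: real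
    and rho :: real and M :: nat
    and s :: "nat \<Rightarrow> real^'p"
    and wstar :: "nat \<Rightarrow> (real^'n) \<times> ((real^'m) \<times> (real^'q))"
    and zbar :: "nat \<Rightarrow> real^'n" and mubar :: "nat \<Rightarrow> (real^'m) \<times> (real^'q)"
    and rA dA lamA rB qB lamB dB C del psi lamH lamG :: real
    and k :: nat
  defines "J \<equiv> (\<lambda>z. \<Sum>i<P. Jb i z)"
    and "Z \<equiv> cbox lo hi"
    and "G \<equiv> Gfun Qc g T"
    and "F \<equiv> Ffun (\<lambda>z. \<Sum>i<P. Jb i z) Qc g T"
    and "KKT \<equiv> is_KKT (\<lambda>z. \<Sum>i<P. Jb i z) Qc g T (cbox lo hi)"
    and "HKKT \<equiv> is_HKKT (\<lambda>z. \<Sum>i<P. Jb i z) Qc g T (cbox lo hi) rho"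
    and "Lk \<equiv> (\<lambda>k z. Lagr (\<lambda>z. \<Sum>i<P. Jb i z) Qc g T rho z (mubar k) (s (Suc k)))"
    and "sw \<equiv> sweep P alpha c0 beta blk lo hi"
    and "wbar \<equiv> (\<lambda>k. (zbar k, mubar k))"
    and "mustar \<equiv> (\<lambda>k. snd (wstar k))"
    and "zinf \<equiv> (\<lambda>k. lim (\<lambda>n. (sweep P alpha c0 beta blk lo hi
                 (\<lambda>z. Lagr (\<lambda>z. \<Sum>i<P. Jb i z) Qc g T rho z (mubar k) (s (Suc k))) ^^ n) (zbar k)))"
    and "winf \<equiv> (\<lambda>k. (lim (\<lambda>n. (sweep P alpha c0 beta blk lo hi
                 (\<lambda>z. Lagr (\<lambda>z. \<Sum>i<P. Jb i z) Qc g T rho z (mubar k) (s (Suc k))) ^^ n) (zbar k)),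
            mubar k + rho *\<^sub>R Gfun Qc g T (lim (\<lambda>n. (sweep P alpha c0 beta blk lo hi
                 (\<lambda>z. Lagr (\<lambda>z. \<Sum>i<P. Jb i z) Qc g T rho z (mubar k) (s (Suc k))) ^^ n) (zbar k))) (s (Suc k))))"
    and "dk \<equiv> (\<lambda>k. (1 / rho) *\<^sub>R (mubar k - snd (wstar k)))"
    and "lamF \<equiv> real P * Max ((\<lambda>i. onorm (\<lambda>x. blockmat bq T i *v x)) ` {..<P})"
  assumes blocks: "\<forall>j. blk j < P" "\<forall>i<P. \<exists>j. blk j = i" "\<forall>r. bq r < P"
    and box: "\<forall>j. lo $ j \<le> hi $ j"
    and polyJ: "\<forall>i<P. polynomial_function (Jb i)"
    and sepJ: "\<forall>i<P. \<forall>z z'. (\<forall>j. blk j = i \<longrightarrow> z $ j = z' $ j) \<longrightarrow> Jb i z = Jb i z'"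
    and polyQ: "polynomial_function Qc"
    and polyg: "polynomial_function g"
    and sepg: "\<forall>r z z'. (\<forall>j. blk j = bq r \<longrightarrow> z $ j = z' $ j) \<longrightarrow> g z $ r = g z' $ r"
    and sweep_par: "beta > 1" "\<forall>i<P. c0 i > 0" "\<forall>i<P. alpha i > 0"
    and rho_pos: "rho > 0" and M_ge: "M \<ge> 1"
    and s_in: "\<forall>k. s k \<in> S"
    and wstar_KKT: "\<forall>k. KKT (wstar k) (s k)"
    and zbar_in: "\<forall>k. zbar k \<in> Z"
    and zbar_rec: "\<forall>k. zbar (Suc k) = (sw (Lk k) ^^ M) (zbar k)"
    and mubar_rec: "\<forall>k. mubar (Suc k) = mubar k + rho *\<^sub>R G (zbar (Suc k)) (s (Suc k))"
    and lamH: "lamH > 0"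
      "\<forall>mut w d d' \<sigma> \<sigma>'. norm (Hfun J Qc g T rho mut w d \<sigma> - Hfun J Qc g T rho mut w d' \<sigma>')
          \<le> lamH * norm ((d, \<sigma>) - (d', \<sigma>'))"
    and lamG: "lamG > 0" "\<forall>\<sigma>. \<forall>z\<in>Z. \<forall>z'\<in>Z. norm (G z \<sigma> - G z' \<sigma>) \<le> lamG * norm (z - z')"
    and hypA: "rA > 0" "dA > 0" "lamA > 0"
      "\<forall>k. \<exists>wA.
         (\<forall>\<sigma>\<in>ball (s k) rA \<inter> S. wA \<sigma> \<in> ball (wstar k) dA \<and> KKT (wA \<sigma>) \<sigma> \<and>
             (\<forall>w\<in>ball (wstar k) dA. KKT w \<sigma> \<longrightarrow> w = wA \<sigma>)) \<and>
         (\<forall>\<sigma>\<in>ball (s k) rA \<inter> S. \<forall>\<sigma>'\<in>ball (s k) rA \<inter> S.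
             norm (wA \<sigma> - wA \<sigma>') \<le> lamA * norm (F (wA \<sigma>') \<sigma> - F (wA \<sigma>') \<sigma>')) \<and>
         (norm (s (Suc k) - s k) < rA \<longrightarrow> wstar (Suc k) = wA (s (Suc k)))"
    and hypB: "rB > 0" "qB > 0" "lamB > 0" "dB \<ge> dA"
    and hypC: "C > 0" "del > 0" "psi > 0"
    and hypBC: "\<forall>k. \<exists>wB.
         (\<forall>d\<in>ball 0 qB. \<forall>\<sigma>\<in>ball (s k) rB \<inter> S.
             wB d \<sigma> \<in> ball (wstar k) dB \<and> HKKT (mustar k) (wB d \<sigma>) d \<sigma> \<and>
             (\<forall>w\<in>ball (wstar k) dB. HKKT (mustar k) w d \<sigma> \<longrightarrow> w = wB d \<sigma>)) \<and>
         (\<forall>d\<in>ball 0 qB. \<forall>\<sigma>\<in>ball (s k) rB \<inter> S. \<forall>d'\<in>ball 0 qB. \<forall>\<sigma>'\<in>ball (s k) rB \<inter> S.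
             norm (wB d \<sigma> - wB d' \<sigma>')
               \<le> lamB * norm (Hfun J Qc g T rho (mustar k) (wB d' \<sigma>') d \<sigma>
                              - Hfun J Qc g T rho (mustar k) (wB d' \<sigma>') d' \<sigma>')) \<and>
         (dk k \<in> ball 0 qB \<and> norm (s (Suc k) - s k) < rB \<longrightarrow> winf k = wB (dk k) (s (Suc k)))"
    and hypC_conv: "\<forall>k. convergent (\<lambda>n. (sw (Lk k) ^^ n) (zbar k))"
    and hypC_rate: "\<forall>k. norm (zbar k - zinf k) < del \<longrightarrow>
         norm (zbar (Suc k) - zinf k) \<le> C * real M powr (- psi) * norm (zbar k - zinf k)"
    and i: "norm (s (Suc k) - s k) < min rA (min rB (qB * rho / (lamA * lamF)))"
    and ii: "norm (wbar k - wstar k) < qB * rho"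
    and iii: "(1 + lamH * lamB / rho) * norm (wbar k - wstar k) + lamH * lamB * norm (s (Suc k) - s k) < del"
  shows "norm (wbar (Suc k) - wstar (Suc k))
           \<le> (C * (1 + rho * lamG) * (1 + lamB * lamH / rho) * real M powr (- psi) + lamB * lamH / rho)
               * norm (wbar k - wstar k)
             + (C * (1 + rho * lamG) * lamB * lamH * real M powr (- psi) + lamB * lamH * lamA * lamF / rho)
               * norm (s (Suc k) - s k)"
proof -
  let ?e = "norm (wbar k - wstar k)" and ?ds = "norm (s (Suc k) - s k)"
  have ds: "?ds < rA" "?ds < rB" using i by auto
  have shift_small: "lamA * lamF * ?ds / rho < qB"
    by (rule scaled_below_radius) (use i hypB(2) rho_pos in auto)
  have F_lip: "norm (F (wstar k) (s (Suc k)) - F (wstar k) (s k)) \<le> lamF * ?ds"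
    unfolding F_def lamF_def using Ffun_param_lipschitz[OF blocks(3)]
    by (simp add: blockwise_norm_bound_def)
  have wstar_close: "wstar (Suc k) \<in> ball (wstar k) dA"
    and wstar_step: "norm (wstar (Suc k) - wstar k) \<le> lamA * lamF * ?ds"
    using KKT_solution_shift[OF hypA(4)[rule_format, of k] F_lip wstar_KKT[rule_format, of k]
        s_in[rule_format, of k] s_in[rule_format, of "Suc k"] ds(1) hypA(2) less_imp_le[OF hypA(3)]]
    by blast+
  define dnext where "dnext = (1 / rho) *\<^sub>R (snd (wstar (Suc k)) - mustar k)"
  have HKKT0: "HKKT (mustar k) (wstar k) 0 (s k)"
    using KKT_solves_perturbed_equation[of _ _ _ _ _ "wstar k" "s k" rho "mustar k"] wstar_KKT
    unfolding HKKT_def KKT_def mustar_def by simp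
  have HKKT1: "HKKT (mustar k) (wstar (Suc k)) dnext (s (Suc k))"
    using KKT_solves_perturbed_equation wstar_KKT unfolding HKKT_def KKT_def dnext_def by blast
  have dk_le: "norm (dk k) \<le> ?e / rho"
    using scaled_snd_diff_le[OF rho_pos order_refl, of "wbar k" "wstar k"] by (simp add: dk_def wbar_def)
  have dk_small: "?e / rho < qB" using ii rho_pos by (simp add: pos_divide_less_eq)
  have dnext_le: "norm dnext \<le> lamA * lamF * ?ds / rho"
    using scaled_snd_diff_le[OF rho_pos wstar_step] by (simp add: dnext_def mustar_def)
  have H_lip: "norm (Hfun J Qc g T rho (mustar k) w d \<sigma> - Hfun J Qc g T rho (mustar k) w d' \<sigma>')
      \<le> lamH * norm ((d, \<sigma>) - (d', \<sigma>'))" for w d d' \<sigma> \<sigma>'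
    using lamH(2) by blast
  have wstar_close_B: "wstar (Suc k) \<in> ball (wstar k) dB" using wstar_close hypB(4) by auto
  have dB_pos: "dB > 0" using hypA(2) hypB(4) by linarith
  note B_estimates = perturbed_solution_estimates[where H = "Hfun J Qc g T rho (mustar k)"
      and sol = "HKKT (mustar k)", OF hypBC[rule_format, of k] H_lip HKKT0 HKKT1 wstar_close_B
      s_in[rule_format, of k] s_in[rule_format, of "Suc k"] ds(2) dk_le dk_small dnext_le shift_small
      dB_pos less_imp_le[OF hypB(3)] less_imp_le[OF lamH(1)]]
  have fst_winf: "fst (winf k) = zinf k" by (simp add: winf_def zinf_def)
  have zinf_in: "zinf k \<in> Z"
    unfolding zinf_def Z_def
    by (rule sweep_limit_in_box) (use hypC_conv zbar_in in \<open>simp_all add: sw_def Lk_def Z_def\<close>)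
  have "winf k = (zinf k, mubar k + rho *\<^sub>R G (zinf k) (s (Suc k)))"
    by (simp add: winf_def zinf_def G_def)
  moreover have "wbar (Suc k) = (zbar (Suc k), mubar k + rho *\<^sub>R G (zbar (Suc k)) (s (Suc k)))"
    using mubar_rec by (simp add: wbar_def)
  moreover have "norm (G (zbar (Suc k)) (s (Suc k)) - G (zinf k) (s (Suc k)))
      \<le> lamG * norm (zbar (Suc k) - zinf k)"
    using lamG(2) zinf_in zbar_in by blast
  ultimately have dual: "norm (wbar (Suc k) - winf k)
      \<le> (1 + rho * lamG) * norm (fst (wbar (Suc k)) - fst (winf k))"
    using multiplier_update_error[OF _ less_imp_le[OF rho_pos]] by simp
  have rate: "norm (fst (wbar k) - fst (winf k)) < del \<Longrightarrow>
      norm (fst (wbar (Suc k)) - fst (winf k)) \<le> C * real M powr (- psi) * norm (fst (wbar k) - fst (winf k))"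
    using hypC_rate unfolding fst_winf by (simp add: wbar_def)
  show ?thesis
    by (rule tracking_error_recursion[OF B_estimates rate dual iii])
      (use hypC(1) lamG(1) rho_pos in simp_all)
qed

end
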